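(* There exists a constant $c_0$, depending only on $s$ and $d$, such that the following holds whenever $c_{db}\ge c_0$. Let $Q_0,Q_1,\dots,Q_n\in\mathcal D$ be cubes such that $Q_j$ is a child of $Q_{j-1}$ for $1\le j\le n$, and suppose that $Q_j$ is not $p$-doubling (with constant $c_{db}$) for $1\le j\le n$. Then $$\Theta(Q_j)\le 2^{-j/2}\,p(Q_0)\qquad\text{for }0\le j\le n.$$
   Context: $0<s<d$. $E\subset\mathbb R^d$ is a Cantor set built from a compact $Q^0$ by repeatedly choosing, inside each closed "cube" $Q$ of generation $k$, a finite nonempty family of closed children (the cubes of generation $k+1$), such that each child $Q'$ of $Q$ satisfies $\frac18\ell(Q)\le\ell(Q')\le\frac13\ell(Q)$, where $\ell(Q)=\operatorname{diam}(Q)$, and distinct children of $Q$ are at distance $\ge c_{sep}\ell(Q)$. $\mathcal D$ is the family of all such cubes. $\mu$ is a finite Borel measure supported on $E$ with $\mu(Q)>0$ for all $Q\in\mathcal D$. $\Theta(Q)=\mu(Q)/\ell(Q)^s$, $p(Q)=\sum_{P\in\mathcal D,\,P\supset Q}\frac{\ell(Q)}{\ell(P)}\Theta(P)$, and $Q$ is $p$-doubling with constant $c_{db}$ if $p(Q)\le c_{db}\Theta(Q)$. *)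

theory Defs
  imports "HOL-Analysis.Analysis"
begin

primrec cantor_gen :: "'a set \<Rightarrow> ('a set \<Rightarrow> 'a set set) \<Rightarrow> nat \<Rightarrow> 'a set set" where
  "cantor_gen Q0 ch 0 = {Q0}"
| "cantor_gen Q0 ch (Suc k) = \<Union> (ch ` cantor_gen Q0 ch k)"

definition cantor_cubes :: "'a set \<Rightarrow> ('a set \<Rightarrow> 'a set set) \<Rightarrow> 'a set set" where
  "cantor_cubes Q0 ch = (\<Union>k. cantor_gen Q0 ch k)"

definition cantor_set :: "'a set \<Rightarrow> ('a set \<Rightarrow> 'a set set) \<Rightarrow> 'a set" where
  "cantor_set Q0 ch = (\<Inter>k. \<Union> (cantor_gen Q0 ch k))"

definition cantor_system :: "'a::euclidean_space set \<Rightarrow> ('a set \<Rightarrow> 'a set set) \<Rightarrow> real \<Rightarrow> bool" where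
  "cantor_system Q0 ch csep \<longleftrightarrow>
     compact Q0 \<and> csep > 0 \<and>
     (\<forall>Q\<in>cantor_cubes Q0 ch.
        finite (ch Q) \<and> ch Q \<noteq> {} \<and>
        (\<forall>Q'\<in>ch Q. closed Q' \<and> Q' \<subseteq> Q \<and>
            diameter Q / 8 \<le> diameter Q' \<and> diameter Q' \<le> diameter Q / 3) \<and>
        (\<forall>Q1\<in>ch Q. \<forall>Q2\<in>ch Q. Q1 \<noteq> Q2 \<longrightarrow> setdist Q1 Q2 \<ge> csep * diameter Q))"

text \<open>Density Theta(Q) = mu(Q) / l(Q)^s with l(Q) = diam Q.\<close>
definition Theta :: "'a::euclidean_space measure \<Rightarrow> real \<Rightarrow> 'a set \<Rightarrow> real" where
  "Theta \<mu> s Q = measure \<mu> Q / (diameter Q) powr s"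

definition pdens :: "'a::euclidean_space measure \<Rightarrow> real \<Rightarrow> 'a set set \<Rightarrow> 'a set \<Rightarrow> real" where
  "pdens \<mu> s D Q = (\<Sum>P\<in>{P\<in>D. Q \<subseteq> P}. diameter Q / diameter P * Theta \<mu> s P)"

definition p_doubling :: "'a::euclidean_space measure \<Rightarrow> real \<Rightarrow> 'a set set \<Rightarrow> real \<Rightarrow> 'a set \<Rightarrow> bool" where
  "p_doubling \<mu> s D cdb Q \<longleftrightarrow> pdens \<mu> s D Q \<le> cdb * Theta \<mu> s Q"

end

theory Submission
  imports Defs
begin

text \<open>If Q is a child of R, the ancestors of Q are Q itself and the ancestors of R, and
  l(Q)/l(P) \<le> (1/3) l(R)/l(P); hence p(Q) \<le> \<Theta>(Q) + p(R)/3. When Q is not p-doubling with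
  c_db \<ge> 3 we have \<Theta>(Q) < p(Q)/3, so p(Q) \<le> p(R)/2. Along a chain of non-doubling cubes
  p therefore decays like 2^(-j), and \<Theta>(Q_j) \<le> p(Q_j) \<le> 2^(-j) p(Q_0) \<le> 2^(-j/2) p(Q_0).\<close>

lemma Theta_nonneg: "0 \<le> Theta \<mu> s Q"
  unfolding Theta_def by simp

lemma pdens_nonneg:
  assumes "\<forall>P\<in>D. bounded P" "bounded Q"
  shows "0 \<le> pdens \<mu> s D Q"
  unfolding pdens_def using assms
  by (intro sum_nonneg mult_nonneg_nonneg divide_nonneg_nonneg diameter_ge_0 Theta_nonneg) auto

lemma Theta_le_pdens:
  assumes "Q \<in> D" "finite {P\<in>D. Q \<subseteq> P}" "\<forall>P\<in>D. bounded P"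
  shows "Theta \<mu> s Q \<le> pdens \<mu> s D Q"
proof -
  have "Theta \<mu> s Q = diameter Q / diameter Q * Theta \<mu> s Q"
    by (cases "diameter Q = 0") (auto simp: Theta_def)
  also have "\<dots> \<le> pdens \<mu> s D Q"
    unfolding pdens_def using assms
    by (intro member_le_sum) (auto intro!: mult_nonneg_nonneg divide_nonneg_nonneg diameter_ge_0 Theta_nonneg)
  finally show ?thesis .
qed

lemma half_power_le_powr_half: "(1/2::real) ^ j \<le> 2 powr (- real j / 2)"
proof -
  have "(1/2::real) ^ j = 2 powr (- real j)"
    by (simp add: power_one_over powr_minus_divide powr_realpow)
  also have "\<dots> \<le> 2 powr (- real j / 2)"
    by (intro powr_mono) auto
  finally show ?thesis .
qed

text \<open>Nonemptiness of the cubes (a consequence of \<mu>(Q) > 0) makes ancestor sets finite; an empty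
  cube would lie in every cube, and the sum defining p would be the junk value 0.\<close>
locale cantor_construction =
  fixes Q0 :: "'a::euclidean_space set" and ch :: "'a set \<Rightarrow> 'a set set" and csep :: real
  assumes system: "cantor_system Q0 ch csep"
    and cubes_nonempty: "Q \<in> cantor_cubes Q0 ch \<Longrightarrow> Q \<noteq> {}"
begin

abbreviation gen :: "nat \<Rightarrow> 'a set set" where
  "gen \<equiv> cantor_gen Q0 ch"

abbreviation cubes :: "'a set set" where
  "cubes \<equiv> cantor_cubes Q0 ch"

lemma gen_subset_cubes: "Q \<in> gen k \<Longrightarrow> Q \<in> cubes"
  by (auto simp: cantor_cubes_def)

lemma cube_in_gen: "Q \<in> cubes \<Longrightarrow> \<exists>k. Q \<in> gen k"
  by (auto simp: cantor_cubes_def)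

lemma child_in_gen: "R \<in> gen k \<Longrightarrow> Q \<in> ch R \<Longrightarrow> Q \<in> gen (Suc k)"
  by auto

lemma child_in_cubes: "R \<in> cubes \<Longrightarrow> Q \<in> ch R \<Longrightarrow> Q \<in> cubes"
  by (meson child_in_gen cube_in_gen gen_subset_cubes)

lemma child_subset: "R \<in> cubes \<Longrightarrow> Q \<in> ch R \<Longrightarrow> Q \<subseteq> R"
  using system unfolding cantor_system_def by blast

lemma diameter_child_le: "R \<in> cubes \<Longrightarrow> Q \<in> ch R \<Longrightarrow> diameter Q \<le> diameter R / 3"
  using system unfolding cantor_system_def by blast

lemma finite_children: "R \<in> cubes \<Longrightarrow> finite (ch R)"
  using system unfolding cantor_system_def by blast

lemma setdist_children_ge:
  "R \<in> cubes \<Longrightarrow> A \<in> ch R \<Longrightarrow> B \<in> ch R \<Longrightarrow> A \<noteq> B \<Longrightarrow> csep * diameter R \<le> setdist A B"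
  using system unfolding cantor_system_def by blast

lemma gen_ancestor: "k \<le> m \<Longrightarrow> Q \<in> gen m \<Longrightarrow> \<exists>P\<in>gen k. Q \<subseteq> P"
proof (induction m arbitrary: Q rule: dec_induct)
  case (step m)
  then obtain R where "R \<in> gen m" "Q \<in> ch R" by auto
  with step.IH show ?case
    by (meson child_subset gen_subset_cubes order_trans)
qed auto

lemma finite_gen: "finite (gen k)"
  by (induction k) (auto intro: finite_children gen_subset_cubes)

lemma bounded_cube:
  assumes "Q \<in> cubes"
  shows "bounded Q"
proof -
  obtain k where "Q \<in> gen k" using cube_in_gen assms by blast
  then obtain P where "P \<in> gen 0" "Q \<subseteq> P" using gen_ancestor[of 0 k] by blast
  moreover have "compact Q0" using system unfolding cantor_system_def by blast
  ultimately show ?thesis by (auto intro: bounded_subset compact_imp_bounded)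
qed

text \<open>Distinct children of R intersect only if diam R = 0, but then they lie in a set with at
  most one point.\<close>
lemma gen_disjoint: "A \<in> gen k \<Longrightarrow> B \<in> gen k \<Longrightarrow> A \<inter> B \<noteq> {} \<Longrightarrow> A = B"
proof (induction k arbitrary: A B)
  case (Suc k)
  from Suc.prems obtain RA RB where RA: "RA \<in> gen k" "A \<in> ch RA"
    and RB: "RB \<in> gen k" "B \<in> ch RB" by auto
  have "A \<subseteq> RA" "B \<subseteq> RB"
    using RA RB by (auto dest: child_subset[OF gen_subset_cubes])
  with Suc.IH[OF RA(1) RB(1)] Suc.prems have same_parent: "RA = RB" by blast
  show "A = B"
  proof (rule ccontr)
    assume "A \<noteq> B"
    obtain z where z: "z \<in> A" "z \<in> B" using Suc.prems by blast
    have "csep * diameter RA \<le> setdist A B"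
      using setdist_children_ge[OF gen_subset_cubes[OF RA(1)] RA(2)] RB(2) same_parent \<open>A \<noteq> B\<close>
      by blast
    then have "csep * diameter RA \<le> 0"
      using setdist_eq_0I[OF z] by simp
    moreover have "csep > 0" using system unfolding cantor_system_def by blast
    ultimately have "diameter RA \<le> 0" by (simp add: mult_le_0_iff)
    then have "\<And>y. y \<in> RA \<Longrightarrow> y = z"
      using diameter_bounded_bound[OF bounded_cube[OF gen_subset_cubes[OF RA(1)]]]
        \<open>A \<subseteq> RA\<close> z(1) by (metis dist_le_zero_iff order_trans subsetD)
    then have "A = {z}" "B = {z}"
      using \<open>A \<subseteq> RA\<close> \<open>B \<subseteq> RB\<close> same_parent z by auto
    with \<open>A \<noteq> B\<close> show False by simp
  qed
qed auto

lemma gen_nested: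
  assumes "k \<le> m" "P \<in> gen k" "Q \<in> gen m" "P \<inter> Q \<noteq> {}"
  shows "Q \<subseteq> P"
proof -
  obtain P' where "P' \<in> gen k" "Q \<subseteq> P'" using gen_ancestor assms(1,3) by blast
  with assms gen_disjoint[of P' k P] show ?thesis by blast
qed

lemma finite_ancestors:
  assumes "Q \<in> cubes"
  shows "finite {P\<in>cubes. Q \<subseteq> P}"
proof -
  obtain m where m: "Q \<in> gen m" using cube_in_gen assms by blast
  have "{P\<in>cubes. Q \<subseteq> P} \<subseteq> insert Q (\<Union>k<m. gen k)"
  proof
    fix P assume "P \<in> {P\<in>cubes. Q \<subseteq> P}"
    then obtain k where k: "P \<in> gen k" "Q \<subseteq> P" using cube_in_gen by blast
    show "P \<in> insert Q (\<Union>k<m. gen k)"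
    proof (cases "k < m")
      case False
      then have "P \<subseteq> Q"
        using gen_nested[OF _ m k(1)] cubes_nonempty[OF assms] k(2) by auto
      with k(2) show ?thesis by simp
    qed (use k in blast)
  qed
  then show ?thesis by (rule finite_subset) (simp add: finite_gen)
qed

lemma ancestors_of_child:
  assumes "R \<in> cubes" "Q \<in> ch R"
  shows "{P\<in>cubes. Q \<subseteq> P} \<subseteq> insert Q {P\<in>cubes. R \<subseteq> P}"
proof
  fix P assume "P \<in> {P\<in>cubes. Q \<subseteq> P}"
  then have P: "P \<in> cubes" "Q \<subseteq> P" by auto
  obtain k where k: "P \<in> gen k" using cube_in_gen P(1) by blast
  obtain m where m: "R \<in> gen m" using cube_in_gen assms(1) by blast
  have Q: "Q \<in> gen (Suc m)" "Q \<subseteq> R" "Q \<noteq> {}"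
    using child_in_gen[OF m assms(2)] child_subset[OF assms] cubes_nonempty child_in_cubes[OF assms]
    by auto
  show "P \<in> insert Q {P\<in>cubes. R \<subseteq> P}"
  proof (cases "k \<le> m")
    case True
    with gen_nested[OF True k m] Q P show ?thesis by blast
  next
    case False
    with gen_nested[of "Suc m" k Q P] Q k P show ?thesis by auto
  qed
qed

lemma pdens_cube_nonneg: "Q \<in> cubes \<Longrightarrow> 0 \<le> pdens \<mu> s cubes Q"
  by (simp add: bounded_cube pdens_nonneg)

lemma pdens_child_le:
  assumes "R \<in> cubes" "Q \<in> ch R"
  shows "pdens \<mu> s cubes Q \<le> Theta \<mu> s Q + pdens \<mu> s cubes R / 3"
proof -
  define f where "f P = diameter Q / diameter P * Theta \<mu> s P" for P
  have Q: "Q \<in> cubes" using child_in_cubes[OF assms] .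
  have f_nonneg: "0 \<le> f P" if "P \<in> cubes" for P
    unfolding f_def using that Q bounded_cube
    by (intro mult_nonneg_nonneg divide_nonneg_nonneg diameter_ge_0 Theta_nonneg)
  have fin: "finite {P\<in>cubes. R \<subseteq> P}" using finite_ancestors[OF assms(1)] .
  have "pdens \<mu> s cubes Q = sum f {P\<in>cubes. Q \<subseteq> P}"
    unfolding pdens_def f_def ..
  also have "\<dots> \<le> sum f (insert Q {P\<in>cubes. R \<subseteq> P})"
    using fin ancestors_of_child[OF assms] f_nonneg Q by (intro sum_mono2) auto
  also have "\<dots> \<le> f Q + sum f {P\<in>cubes. R \<subseteq> P}"
    using fin f_nonneg by (cases "Q \<in> {P\<in>cubes. R \<subseteq> P}") (auto simp: insert_absorb)
  also have "f Q \<le> Theta \<mu> s Q"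
    unfolding f_def by (cases "diameter Q = 0") (auto simp: Theta_def)
  also have "sum f {P\<in>cubes. R \<subseteq> P} \<le> pdens \<mu> s cubes R / 3"
  proof -
    have dQ: "diameter Q \<le> diameter R / 3" "0 \<le> diameter Q"
      using diameter_child_le[OF assms] diameter_ge_0[OF bounded_cube[OF Q]] by auto
    have pR: "0 \<le> pdens \<mu> s cubes R"
      using pdens_cube_nonneg assms(1) .
    show ?thesis
    proof (cases "diameter R = 0")
      case True
      with dQ have "sum f {P\<in>cubes. R \<subseteq> P} = 0" unfolding f_def by simp
      with pR show ?thesis by simp
    next
      case False
      have "sum f {P\<in>cubes. R \<subseteq> P} = diameter Q / diameter R * pdens \<mu> s cubes R"
        unfolding pdens_def sum_distrib_left f_def using False by (intro sum.cong) auto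
      also have "\<dots> \<le> 1/3 * pdens \<mu> s cubes R"
        using False dQ diameter_ge_0[OF bounded_cube[OF assms(1)]] pR
        by (intro mult_right_mono) (auto simp: field_simps)
      finally show ?thesis by simp
    qed
  qed
  finally show ?thesis by simp
qed

lemma pdens_non_doubling_child_le:
  assumes "3 \<le> cdb" "R \<in> cubes" "Q \<in> ch R" "\<not> p_doubling \<mu> s cubes cdb Q"
  shows "pdens \<mu> s cubes Q \<le> pdens \<mu> s cubes R / 2"
proof -
  have "3 * Theta \<mu> s Q \<le> cdb * Theta \<mu> s Q"
    using assms(1) Theta_nonneg by (intro mult_right_mono)
  also have "\<dots> < pdens \<mu> s cubes Q"
    using assms(4) unfolding p_doubling_def by simp
  finally show ?thesis using pdens_child_le[OF assms(2,3), of \<mu> s] by linarith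
qed

context
  fixes Qs :: "nat \<Rightarrow> 'a set" and n :: nat
  assumes root: "Qs 0 \<in> cubes"
    and chain: "\<forall>j\<in>{1..n}. Qs j \<in> ch (Qs (j - 1))"
begin

lemma chain_child: "j < n \<Longrightarrow> Qs (Suc j) \<in> ch (Qs j)"
  using chain by force

lemma chain_in_cubes: "j \<le> n \<Longrightarrow> Qs j \<in> cubes"
proof (induction j)
  case (Suc j)
  then show ?case using child_in_cubes chain_child[of j] by simp
qed (simp add: root)

lemma pdens_non_doubling_chain:
  assumes "3 \<le> cdb" "\<forall>j\<in>{1..n}. \<not> p_doubling \<mu> s cubes cdb (Qs j)" "j \<le> n"
  shows "pdens \<mu> s cubes (Qs j) \<le> (1/2) ^ j * pdens \<mu> s cubes (Qs 0)"
  using assms(3)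
proof (induction j)
  case (Suc j)
  have "pdens \<mu> s cubes (Qs (Suc j)) \<le> pdens \<mu> s cubes (Qs j) / 2"
    using Suc.prems assms(2) chain_in_cubes chain_child
    by (intro pdens_non_doubling_child_le[OF assms(1)]) auto
  with Suc show ?case by simp
qed simp

end

end

theorem lemma2p1:
  fixes s :: real
  assumes "0 < s" and "s < real DIM('a::euclidean_space)"
  shows "\<exists>c0::real. \<forall>(Q0::'a set) ch csep (\<mu>::'a measure) cdb (n::nat) (Qs::nat \<Rightarrow> 'a set).
           cantor_system Q0 ch csep \<and>
           finite_measure \<mu> \<and> sets \<mu> = sets borel \<and>
           emeasure \<mu> (UNIV - cantor_set Q0 ch) = 0 \<and>
           (\<forall>Q\<in>cantor_cubes Q0 ch. emeasure \<mu> Q > 0) \<and>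
           cdb \<ge> c0 \<and>
           Qs 0 \<in> cantor_cubes Q0 ch \<and>
           (\<forall>j\<in>{1..n}. Qs j \<in> ch (Qs (j - 1))) \<and>
           (\<forall>j\<in>{1..n}. \<not> p_doubling \<mu> s (cantor_cubes Q0 ch) cdb (Qs j))
           \<longrightarrow> (\<forall>j\<in>{0..n}. Theta \<mu> s (Qs j)
                  \<le> 2 powr (- real j / 2) * pdens \<mu> s (cantor_cubes Q0 ch) (Qs 0))"
proof (intro exI[of _ 3] allI impI ballI, elim conjE)
  fix Q0 :: "'a set" and ch csep and \<mu> :: "'a measure" and cdb and n j :: nat
    and Qs :: "nat \<Rightarrow> 'a set"
  assume system: "cantor_system Q0 ch csep"
    and positive: "\<forall>Q\<in>cantor_cubes Q0 ch. emeasure \<mu> Q > 0"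
    and cdb: "3 \<le> cdb" and root: "Qs 0 \<in> cantor_cubes Q0 ch"
    and chain: "\<forall>j\<in>{1..n}. Qs j \<in> ch (Qs (j - 1))"
    and non_doubling: "\<forall>j\<in>{1..n}. \<not> p_doubling \<mu> s (cantor_cubes Q0 ch) cdb (Qs j)"
    and j: "j \<in> {0..n}"
  interpret cantor_construction Q0 ch csep
    using system positive by unfold_locales auto
  have "Theta \<mu> s (Qs j) \<le> pdens \<mu> s cubes (Qs j)"
    using j chain_in_cubes[OF root chain] finite_ancestors bounded_cube
    by (intro Theta_le_pdens) auto
  also have "\<dots> \<le> (1/2) ^ j * pdens \<mu> s cubes (Qs 0)"
    using j pdens_non_doubling_chain[OF root chain cdb non_doubling] by simp
  also have "\<dots> \<le> 2 powr (- real j / 2) * pdens \<mu> s cubes (Qs 0)"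
    using half_power_le_powr_half pdens_cube_nonneg[OF root] by (rule mult_right_mono)
  finally show "Theta \<mu> s (Qs j) \<le> 2 powr (- real j / 2) * pdens \<mu> s cubes (Qs 0)" .
qed

end
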